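(* Let $P_2$ have vertices $u,v$ and $P_3$ have vertices $1,2,3$ (with $2$ the middle vertex). Then the Cartesian product $P_2\square P_3$ has pretty good state transfer both between $(u,1)$ and $(u,3)$ and between $(u,1)$ and $(v,1)$, although $(u,3)\neq(v,1)$.
   Context: $P_m$ denotes the path on $m$ vertices. The transition matrix of a graph with adjacency matrix $A$ is $H(t)=\exp(-itA)$. The Cartesian product $G_1\square G_2$ has vertex set $V(G_1)\times V(G_2)$, with $(u_1,u_2)\sim(v_1,v_2)$ iff either $u_1\sim v_1$ and $u_2=v_2$, or $u_1=v_1$ and $u_2\sim v_2$. A graph has pretty good state transfer between vertices $x$ and $y$ if for every $\epsilon>0$ there is $t\in\mathbb R$ with $\big||e_x^TH(t)e_y|-1\big|<\epsilon$. *)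

theory Defs
  imports Complex_Main
begin

type_synonym 'a graph = "'a set \<times> ('a \<Rightarrow> 'a \<Rightarrow> bool)"

definition verts :: "'a graph \<Rightarrow> 'a set" where "verts G = fst G"
definition adj :: "'a graph \<Rightarrow> 'a \<Rightarrow> 'a \<Rightarrow> bool" where
  "adj G x y = (x \<in> verts G \<and> y \<in> verts G \<and> snd G x y)"

definition path_graph :: "nat \<Rightarrow> nat graph" where
  "path_graph m = ({1..m}, (\<lambda>i j. i = j + 1 \<or> j = i + 1))"

definition cart_prod :: "'a graph \<Rightarrow> 'b graph \<Rightarrow> ('a \<times> 'b) graph" where
  "cart_prod G1 G2 = (verts G1 \<times> verts G2,
     (\<lambda>(u1, u2) (v1, v2). (adj G1 u1 v1 \<and> u2 = v2) \<or> (u1 = v1 \<and> adj G2 u2 v2)))"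

definition adj_matrix :: "'a graph \<Rightarrow> 'a \<Rightarrow> 'a \<Rightarrow> complex" where
  "adj_matrix G x y = (if adj G x y then 1 else 0)"

fun mat_pow :: "'a set \<Rightarrow> ('a \<Rightarrow> 'a \<Rightarrow> complex) \<Rightarrow> nat \<Rightarrow> 'a \<Rightarrow> 'a \<Rightarrow> complex" where
  "mat_pow V M 0 = (\<lambda>x y. if x = y then 1 else 0)"
| "mat_pow V M (Suc k) = (\<lambda>x y. \<Sum>z\<in>V. M x z * mat_pow V M k z y)"

definition transition :: "'a graph \<Rightarrow> real \<Rightarrow> 'a \<Rightarrow> 'a \<Rightarrow> complex" where
  "transition G t x y =
     (\<Sum>k. ((- \<i> * complex_of_real t) ^ k / of_nat (fact k)) * mat_pow (verts G) (adj_matrix G) k x y)"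

definition pgst :: "'a graph \<Rightarrow> 'a \<Rightarrow> 'a \<Rightarrow> bool" where
  "pgst G x y = (\<forall>\<epsilon>>0. \<exists>t::real. \<bar>cmod (transition G t x y) - 1\<bar> < \<epsilon>)"

end

theory Submission
  imports Defs "HOL-Analysis.Kronecker_Approximation_Theorem"
begin

text \<open>The adjacency matrix of \<open>P\<^sub>2 \<box> P\<^sub>3\<close> is \<open>A\<^sub>2 \<otimes> I + I \<otimes> A\<^sub>3\<close>, so its transition
  matrix factors as \<open>H\<^sub>2(t) \<otimes> H\<^sub>3(t)\<close>. Diagonalising both paths, the amplitude from \<open>(u,1)\<close>
  to \<open>(u,3)\<close> is \<open>cos t (cos (\<surd>2 t) - 1) / 2\<close> and the one from \<open>(u,1)\<close> to \<open>(v,1)\<close> is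
  \<open>-i sin t (cos (\<surd>2 t) + 1) / 2\<close>. As \<open>\<surd>2\<close> is irrational, Kronecker's theorem makes \<open>k\<surd>2\<close>
  (\<open>k\<close> an integer) come arbitrarily close to any prescribed residue mod 1; at \<open>t = 2\<pi>k\<close>, resp.
  \<open>t = 2\<pi>k + \<pi>/2\<close>, this makes the first, resp. second, amplitude arbitrarily close to 1 in
  modulus.\<close>

text \<open>The zero function counts as an eigenvector here.\<close>

definition is_eigenvector :: "'a graph \<Rightarrow> complex \<Rightarrow> ('a \<Rightarrow> complex) \<Rightarrow> bool"
  where "is_eigenvector G \<mu> \<phi> \<longleftrightarrow> (\<forall>x\<in>verts G. (\<Sum>z\<in>verts G. adj_matrix G x z * \<phi> z) = \<mu> * \<phi> x)"

definition spectral_resolution ::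
  "'a graph \<Rightarrow> 'e set \<Rightarrow> ('e \<Rightarrow> complex) \<Rightarrow> ('e \<Rightarrow> real) \<Rightarrow> ('e \<Rightarrow> 'a \<Rightarrow> complex) \<Rightarrow> bool"
  where "spectral_resolution G E c \<mu> \<phi> \<longleftrightarrow> (\<forall>e\<in>E. is_eigenvector G (\<mu> e) (\<phi> e))
    \<and> (\<forall>x\<in>verts G. \<forall>y\<in>verts G. (\<Sum>e\<in>E. c e * \<phi> e x * \<phi> e y) = (if x = y then 1 else 0))"

lemma mat_pow_spectral:
  assumes "spectral_resolution G E c \<mu> \<phi>" and "x \<in> verts G" and "y \<in> verts G"
  shows "mat_pow (verts G) (adj_matrix G) k x y = (\<Sum>e\<in>E. c e * \<mu> e ^ k * \<phi> e x * \<phi> e y)"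
  using assms(2)
proof (induction k arbitrary: x)
  case 0
  then show ?case using assms(1,3) by (simp add: spectral_resolution_def)
next
  case (Suc k)
  have eigen: "(\<Sum>z\<in>verts G. adj_matrix G x z * \<phi> e z) = \<mu> e * \<phi> e x" if "e \<in> E" for e
    using assms(1) Suc.prems that by (simp add: spectral_resolution_def is_eigenvector_def)
  have "mat_pow (verts G) (adj_matrix G) (Suc k) x y
      = (\<Sum>z\<in>verts G. adj_matrix G x z * (\<Sum>e\<in>E. c e * \<mu> e ^ k * \<phi> e z * \<phi> e y))"
    using Suc.IH by simp
  also have "\<dots> = (\<Sum>e\<in>E. c e * \<mu> e ^ k * \<phi> e y * (\<Sum>z\<in>verts G. adj_matrix G x z * \<phi> e z))"
    by (simp add: sum_distrib_left sum.swap[of _ "verts G"] mult_ac)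
  also have "\<dots> = (\<Sum>e\<in>E. c e * \<mu> e ^ k * \<phi> e y * (\<mu> e * \<phi> e x))"
    by (rule sum.cong) (simp_all add: eigen)
  also have "\<dots> = (\<Sum>e\<in>E. c e * \<mu> e ^ Suc k * \<phi> e x * \<phi> e y)"
    by (simp add: mult_ac)
  finally show ?case .
qed

lemma transition_spectral:
  assumes "spectral_resolution G E c \<mu> \<phi>" and "x \<in> verts G" and "y \<in> verts G"
  shows "transition G t x y = (\<Sum>e\<in>E. c e * \<phi> e x * \<phi> e y * exp (- \<i> * t * \<mu> e))"
proof -
  define a where "a e = c e * \<phi> e x * \<phi> e y" for e
  define z where "z e = (- \<i> * t) * \<mu> e" for e
  have exp_sums: "(\<lambda>k. a e * (z e ^ k / fact k)) sums (a e * exp (z e))" for e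
    using sums_mult[OF exp_converges[of "z e"], of "a e"]
    by (simp add: scaleR_conv_of_real divide_inverse mult_ac)
  have "transition G t x y = (\<Sum>k. \<Sum>e\<in>E. a e * (z e ^ k / fact k))"
    unfolding transition_def mat_pow_spectral[OF assms] a_def z_def power_mult_distrib
    by (simp add: sum_distrib_left mult_ac)
  also have "\<dots> = (\<Sum>e\<in>E. \<Sum>k. a e * (z e ^ k / fact k))"
    using exp_sums by (intro suminf_sum sums_summable)
  also have "\<dots> = (\<Sum>e\<in>E. a e * exp (z e))"
    using exp_sums by (intro sum.cong refl sums_unique[symmetric])
  finally show ?thesis by (simp add: a_def z_def)
qed

lemma verts_cart_prod [simp]: "verts (cart_prod G1 G2) = verts G1 \<times> verts G2"
  by (simp add: cart_prod_def verts_def)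

lemma adj_matrix_cart_prod:
  assumes "\<And>x. \<not> adj G1 x x"
    and "x1 \<in> verts G1" "z1 \<in> verts G1" "x2 \<in> verts G2" "z2 \<in> verts G2"
  shows "adj_matrix (cart_prod G1 G2) (x1, x2) (z1, z2)
    = adj_matrix G1 x1 z1 * (if x2 = z2 then 1 else 0) + (if x1 = z1 then 1 else 0) * adj_matrix G2 x2 z2"
  using assms by (auto simp: adj_matrix_def adj_def cart_prod_def verts_def)

lemma is_eigenvector_cart_prod:
  assumes "is_eigenvector G1 \<mu> \<phi>" and "is_eigenvector G2 \<nu> \<psi>"
    and "finite (verts G1)" and "finite (verts G2)" and loopless: "\<And>x. \<not> adj G1 x x"
  shows "is_eigenvector (cart_prod G1 G2) (\<mu> + \<nu>) (\<lambda>(x1, x2). \<phi> x1 * \<psi> x2)"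
  unfolding is_eigenvector_def
proof
  fix x assume "x \<in> verts (cart_prod G1 G2)"
  then obtain x1 x2 where x: "x = (x1, x2)" "x1 \<in> verts G1" "x2 \<in> verts G2" by auto
  have "(\<Sum>z\<in>verts (cart_prod G1 G2). adj_matrix (cart_prod G1 G2) x z * (case z of (z1, z2) \<Rightarrow> \<phi> z1 * \<psi> z2))
      = (\<Sum>z1\<in>verts G1. \<Sum>z2\<in>verts G2.
           (if x2 = z2 then adj_matrix G1 x1 z1 * \<phi> z1 * \<psi> z2 else 0)
         + (if x1 = z1 then \<phi> z1 * (adj_matrix G2 x2 z2 * \<psi> z2) else 0))"
    unfolding verts_cart_prod sum.cartesian_product' x(1)
    by (intro sum.cong refl) (simp add: adj_matrix_cart_prod[OF loopless x(2) _ x(3)] algebra_simps)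
  also have "\<dots> = (\<Sum>z1\<in>verts G1. adj_matrix G1 x1 z1 * \<phi> z1) * \<psi> x2
                  + \<phi> x1 * (\<Sum>z2\<in>verts G2. adj_matrix G2 x2 z2 * \<psi> z2)"
    using x assms(3,4)
    by (simp add: sum.distrib sum.swap[of "\<lambda>z1 z2. if x1 = z1 then _ z1 z2 else 0"]
        sum_distrib_left sum_distrib_right)
  also have "\<dots> = (\<mu> + \<nu>) * (case x of (x1, x2) \<Rightarrow> \<phi> x1 * \<psi> x2)"
    using assms(1,2) x by (simp add: is_eigenvector_def algebra_simps)
  finally show "(\<Sum>z\<in>verts (cart_prod G1 G2). adj_matrix (cart_prod G1 G2) x z * (case z of (z1, z2) \<Rightarrow> \<phi> z1 * \<psi> z2))
      = (\<mu> + \<nu>) * (case x of (x1, x2) \<Rightarrow> \<phi> x1 * \<psi> x2)" .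
qed

lemma spectral_resolution_cart_prod:
  assumes R1: "spectral_resolution G1 E c \<mu> \<phi>" and R2: "spectral_resolution G2 F d \<nu> \<psi>"
    and fin: "finite (verts G1)" "finite (verts G2)" and loopless: "\<And>x. \<not> adj G1 x x"
  shows "spectral_resolution (cart_prod G1 G2) (E \<times> F) (\<lambda>(e, f). c e * d f) (\<lambda>(e, f). \<mu> e + \<nu> f)
    (\<lambda>(e, f) (x1, x2). \<phi> e x1 * \<psi> f x2)"
proof -
  have eigen: "is_eigenvector (cart_prod G1 G2) (\<mu> e + \<nu> f) (\<lambda>(x1, x2). \<phi> e x1 * \<psi> f x2)"
    if "e \<in> E" "f \<in> F" for e f
    using R1 R2 that is_eigenvector_cart_prod[OF _ _ fin loopless, of "\<mu> e" "\<phi> e" "\<nu> f" "\<psi> f"]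
    by (simp add: spectral_resolution_def)
  have complete: "(\<Sum>(e, f)\<in>E \<times> F. c e * d f * (\<phi> e x1 * \<psi> f x2) * (\<phi> e y1 * \<psi> f y2))
      = (if (x1, x2) = (y1, y2) then 1 else 0)"
    if "x1 \<in> verts G1" "y1 \<in> verts G1" "x2 \<in> verts G2" "y2 \<in> verts G2" for x1 x2 y1 y2
  proof -
    have "(\<Sum>(e, f)\<in>E \<times> F. c e * d f * (\<phi> e x1 * \<psi> f x2) * (\<phi> e y1 * \<psi> f y2))
        = (\<Sum>e\<in>E. c e * \<phi> e x1 * \<phi> e y1) * (\<Sum>f\<in>F. d f * \<psi> f x2 * \<psi> f y2)"
      by (simp add: sum_product sum.cartesian_product mult_ac)
    then show ?thesis
      using R1 R2 that by (simp add: spectral_resolution_def)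
  qed
  show ?thesis
    unfolding spectral_resolution_def using eigen complete by (auto simp: case_prod_beta')
qed

lemma transition_cart_prod:
  assumes R1: "spectral_resolution G1 E c \<mu> \<phi>" and R2: "spectral_resolution G2 F d \<nu> \<psi>"
    and fin: "finite (verts G1)" "finite (verts G2)" and loopless: "\<And>x. \<not> adj G1 x x"
    and "x1 \<in> verts G1" "y1 \<in> verts G1" "x2 \<in> verts G2" "y2 \<in> verts G2"
  shows "transition (cart_prod G1 G2) t (x1, x2) (y1, y2) = transition G1 t x1 y1 * transition G2 t x2 y2"
proof -
  have R: "spectral_resolution (cart_prod G1 G2) (E \<times> F) (\<lambda>(e, f). c e * d f) (\<lambda>(e, f). \<mu> e + \<nu> f)
    (\<lambda>(e, f) (x1, x2). \<phi> e x1 * \<psi> f x2)"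
    by (rule spectral_resolution_cart_prod[OF R1 R2 fin loopless])
  show ?thesis
    unfolding transition_spectral[OF R1 assms(6,7)] transition_spectral[OF R2 assms(8,9)]
    using assms(6-9)
    by (subst transition_spectral[OF R])
      (simp_all add: sum_product sum.cartesian_product case_prod_unfold distrib_left
        exp_add[symmetric] mult_ac)
qed

lemma path_graph_no_loop: "\<not> adj (path_graph m) i i"
  by (simp add: adj_def path_graph_def)

lemma verts_path_graph: "verts (path_graph m) = {1..m}"
  by (simp add: path_graph_def verts_def)

lemma adj_path_graph: "adj (path_graph m) i j \<longleftrightarrow> i \<in> {1..m} \<and> j \<in> {1..m} \<and> (i = j + 1 \<or> j = i + 1)"
  by (simp add: adj_def path_graph_def verts_def)

lemma spectral_resolution_P2:
  "spectral_resolution (path_graph 2) {-1, 1} (\<lambda>_. 1 / 2) (\<lambda>s. of_int s) (\<lambda>s j. if j = 1 then 1 else of_int s)"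
proof -
  have V: "verts (path_graph 2) = {1, 2}" by (auto simp: verts_path_graph)
  show ?thesis
    unfolding spectral_resolution_def is_eigenvector_def V
    by (simp add: adj_matrix_def adj_path_graph)
qed

lemma spectral_resolution_P3:
  "spectral_resolution (path_graph 3) {-1, 0, 1} (\<lambda>s. if s = 0 then 1 / 2 else 1 / 4) (\<lambda>s. of_int s * sqrt 2)
    (\<lambda>s j. if j = 2 then of_int s * sqrt 2 else if s = 0 \<and> j = 3 then -1 else 1)"
proof -
  have V: "verts (path_graph 3) = {1, 2, 3}" by (auto simp: verts_path_graph)
  have sq: "complex_of_real (sqrt 2) * complex_of_real (sqrt 2) = 2"
    by (simp flip: of_real_mult)
  show ?thesis
    unfolding spectral_resolution_def is_eigenvector_def V
    by (simp add: adj_matrix_def adj_path_graph sq algebra_simps)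
qed

lemma transition_P2:
  "transition (path_graph 2) t 1 1 = cos t"
  "transition (path_graph 2) t 1 2 = - \<i> * sin t"
  by (subst transition_spectral[OF spectral_resolution_P2];
      simp add: verts_path_graph complex_eq_iff Re_exp Im_exp)+

lemma transition_P3:
  "transition (path_graph 3) t 1 1 = (1 + cos (sqrt 2 * t)) / 2"
  "transition (path_graph 3) t 1 3 = (cos (sqrt 2 * t) - 1) / 2"
  by (subst transition_spectral[OF spectral_resolution_P3];
      simp add: verts_path_graph complex_eq_iff Re_exp Im_exp mult.commute)+

lemma sqrt_2_irrational: "sqrt 2 \<notin> \<rat>"
proof
  assume "sqrt 2 \<in> \<rat>"
  then obtain m n :: nat where "n \<noteq> 0" "\<bar>sqrt 2\<bar> = m / n" and coprime: "coprime m n"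
    by (rule Rats_abs_nat_div_natE)
  then have "real m = real n * sqrt 2"
    by (simp add: field_simps)
  then have "real (m ^ 2) = real (2 * n ^ 2)"
    by (simp add: power_mult_distrib)
  then have sq: "m ^ 2 = 2 * n ^ 2"
    by (simp only: of_nat_eq_iff)
  then obtain j where m: "m = 2 * j"
    by (metis even_mult_iff even_numeral evenE power2_eq_square)
  then have "n ^ 2 = 2 * j ^ 2" using sq by simp
  then have "even n"
    by (metis even_mult_iff even_numeral power2_eq_square)
  with m coprime show False by simp
qed

lemma cos_ge_one_minus_abs: "1 - \<bar>z\<bar> \<le> cos (z :: real)"
proof -
  have "sin (z / 2) ^ 2 = \<bar>sin (z / 2)\<bar> * \<bar>sin (z / 2)\<bar>"
    by (simp add: power2_eq_square)
  also have "\<dots> \<le> \<bar>sin (z / 2)\<bar> * 1"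
    by (rule mult_left_mono) simp_all
  also have "\<dots> \<le> \<bar>z\<bar> / 2"
    using abs_sin_x_le_abs_x[of "z / 2"] by simp
  finally show ?thesis
    using cos_double_sin[of "z / 2"] by simp
qed

lemma Kronecker_approx_cos:
  fixes \<theta> \<alpha> \<epsilon> :: real
  assumes "\<theta> \<notin> \<rat>" and "\<epsilon> > 0"
  obtains k :: int where "cos (2 * pi * (of_int k * \<theta> - \<alpha>)) > 1 - \<epsilon>"
proof -
  have "\<epsilon> / (2 * pi) > 0"
    using assms(2) by simp
  then obtain h k :: int where close: "\<bar>of_int k * \<theta> - of_int h - \<alpha>\<bar> < \<epsilon> / (2 * pi)"
    using sequence_of_fractional_parts_is_dense[OF assms(1)] by metis
  have "cos (2 * pi * (of_int k * \<theta> - \<alpha>))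
      = cos (2 * pi * (of_int k * \<theta> - of_int h - \<alpha>) + 2 * pi * of_int h)"
    by (simp add: algebra_simps)
  also have "\<dots> = cos (2 * pi * (of_int k * \<theta> - of_int h - \<alpha>))"
    by (simp add: cos_add)
  also have "\<dots> \<ge> 1 - \<bar>2 * pi * (of_int k * \<theta> - of_int h - \<alpha>)\<bar>"
    by (rule cos_ge_one_minus_abs)
  finally have "cos (2 * pi * (of_int k * \<theta> - \<alpha>))
      \<ge> 1 - \<bar>2 * pi * (of_int k * \<theta> - of_int h - \<alpha>)\<bar>" .
  moreover have "\<bar>2 * pi * (of_int k * \<theta> - of_int h - \<alpha>)\<bar> < \<epsilon>"
    using close by (simp add: abs_mult pos_less_divide_eq mult.commute)
  ultimately show ?thesis
    by (intro that[of k]) linarith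
qed

lemma transition_P2_P3:
  "transition (cart_prod (path_graph 2) (path_graph 3)) t (1, 1) (1, 3)
     = of_real (cos t * ((cos (sqrt 2 * t) - 1) / 2))"
  "transition (cart_prod (path_graph 2) (path_graph 3)) t (1, 1) (2, 1)
     = - \<i> * of_real (sin t * ((1 + cos (sqrt 2 * t)) / 2))"
  by (subst transition_cart_prod[OF spectral_resolution_P2 spectral_resolution_P3 _ _ path_graph_no_loop];
      simp add: verts_path_graph transition_P2 transition_P3 del: One_nat_def)+

lemma pgst_P2_P3_path_ends:
  "pgst (cart_prod (path_graph 2) (path_graph 3)) (1, 1) (1, 3)"
  unfolding pgst_def
proof (intro allI impI)
  fix \<epsilon> :: real assume "\<epsilon> > 0"
  then obtain k :: int where k: "cos (2 * pi * (of_int k * sqrt 2 - 1 / 2)) > 1 - 2 * \<epsilon>"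
    using Kronecker_approx_cos[OF sqrt_2_irrational, where \<alpha> = "1 / 2" and \<epsilon> = "2 * \<epsilon>"] by auto
  define t where "t = 2 * pi * of_int k"
  have "cos t = 1"
    unfolding t_def by simp
  moreover have "cos (sqrt 2 * t) = - cos (2 * pi * (of_int k * sqrt 2 - 1 / 2))"
    unfolding t_def by (simp add: right_diff_distrib mult_ac cos_diff)
  ultimately have "cmod (transition (cart_prod (path_graph 2) (path_graph 3)) t (1, 1) (1, 3))
      = (1 + cos (2 * pi * (of_int k * sqrt 2 - 1 / 2))) / 2"
    unfolding transition_P2_P3 norm_mult norm_minus_cancel norm_ii norm_of_real
    by (simp add: abs_mult)
  then show "\<exists>t. \<bar>cmod (transition (cart_prod (path_graph 2) (path_graph 3)) t (1, 1) (1, 3)) - 1\<bar> < \<epsilon>"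
    using k cos_le_one[of "2 * pi * (of_int k * sqrt 2 - 1 / 2)"]
    by (intro exI[of _ t]) (simp add: abs_less_iff del: cos_le_one)
qed

lemma pgst_P2_P3_rung:
  "pgst (cart_prod (path_graph 2) (path_graph 3)) (1, 1) (2, 1)"
  unfolding pgst_def
proof (intro allI impI)
  fix \<epsilon> :: real assume "\<epsilon> > 0"
  then obtain k :: int where k: "cos (2 * pi * (of_int k * sqrt 2 + sqrt 2 / 4)) > 1 - 2 * \<epsilon>"
    using Kronecker_approx_cos[OF sqrt_2_irrational, where \<alpha> = "- sqrt 2 / 4" and \<epsilon> = "2 * \<epsilon>"]
    by auto
  define t where "t = 2 * pi * of_int k + pi / 2"
  have "sin t = 1"
    unfolding t_def by (simp add: sin_add)
  moreover have "cos (sqrt 2 * t) = cos (2 * pi * (of_int k * sqrt 2 + sqrt 2 / 4))"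
    unfolding t_def by (simp add: algebra_simps)
  ultimately have "cmod (transition (cart_prod (path_graph 2) (path_graph 3)) t (1, 1) (2, 1))
      = (1 + cos (2 * pi * (of_int k * sqrt 2 + sqrt 2 / 4))) / 2"
    unfolding transition_P2_P3 norm_mult norm_minus_cancel norm_ii norm_of_real
    using cos_ge_minus_one[of "2 * pi * (of_int k * sqrt 2 + sqrt 2 / 4)"]
    by (simp add: abs_of_nonneg del: cos_ge_minus_one)
  then show "\<exists>t. \<bar>cmod (transition (cart_prod (path_graph 2) (path_graph 3)) t (1, 1) (2, 1)) - 1\<bar> < \<epsilon>"
    using k cos_le_one[of "2 * pi * (of_int k * sqrt 2 + sqrt 2 / 4)"]
    by (intro exI[of _ t]) (simp add: abs_less_iff del: cos_le_one)
qed

theorem mainTheorem6: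
  fixes u v :: nat
  assumes "u = 1" and "v = 2"
  shows "pgst (cart_prod (path_graph 2) (path_graph 3)) (u, 1) (u, 3)
       \<and> pgst (cart_prod (path_graph 2) (path_graph 3)) (u, 1) (v, 1)
       \<and> (u, 3::nat) \<noteq> (v, 1)"
  using assms pgst_P2_P3_path_ends pgst_P2_P3_rung by simp

end
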